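(* Fix $n\ge 2$, $q\in\{1,\dots,n\}$ and $c\in(0,1/2)$. For every $\varepsilon>0$ and $\eta>0$ there is an integer $R$ such that for all $r\ge R$ and all integers $p$ with $0\le p\le r-n$ and $c\le p/r\le 1-c$, \[ \mathbf{P}\left(\left|\frac{k_{p,q}(\mathrm{B}_r)}{\binom{r-n}{p}\,\mu(r,p)}-1\right|>\varepsilon\right)<\eta. \] In other words, for any sequence $\{p_r\}$ with $c\le p_r/r\le 1-c$, $k_{p_r,q}(\mathrm{B}_r)/\big(\binom{r-n}{p_r}\mu(r,p_r)\big)\to 1$ in probability as $r\to\infty$, uniformly in $p_r$.
   Context: Fix an integer $n\ge 2$. For an integer $r\ge n$ write $[r]=\{1,\dots,r\}$ and $\binom{[r]}{n-1}$ for the set of $(n-1)$-element subsets of $[r]$; elements are written $I=\{i_1<\dots<i_{n-1}\}$. A Betti table is an array of real numbers $k_{p,q}$ with columns $p=0,\dots,r-n$ and rows $q=1,\dots,n$. For $I\in\binom{[r]}{n-1}$ write $[r]\setminus I=\{d_0<d_1<\dots<d_{r-n}\}$; the pure diagram $\pi(r,I)$ is the Betti table with $k_{p,q}(\pi(r,I))=0$ if $q\neq d_p-p$, and $k_{p,d_p-p}(\pi(r,I)) = (r-n)!\cdot\prod_{0\le \ell\le r-n,\ \ell\neq p}\frac{1}{|d_\ell-d_p|}$. Let $\{\mathrm{X}_I\}_{I\in\binom{[r]}{n-1}}$ be independent random variables, each uniformly distributed on $[0,1]$, and let $\mathrm{B}_r=\sum_{I}\mathrm{X}_I\,\pi(r,I)$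 be the random Betti table, so $k_{p,q}(\mathrm{B}_r)=\sum_I \mathrm{X}_I\,k_{p,q}(\pi(r,I))$. For fixed $n$ and $q\in[1,n]$ put \[ \mu(r,p)=\frac{1}{2^n}\cdot\frac{p^{q-1}(r-p-n)^{n-q}}{(q-1)!\,(n-q)!}. \] *)

theory Defs
  imports "HOL-Probability.Probability"
begin

definition subsets_idx :: "nat \<Rightarrow> nat \<Rightarrow> nat set set" where
  "subsets_idx n r = {I. I \<subseteq> {1..r} \<and> card I = n - 1}"

definition compl_list :: "nat \<Rightarrow> nat set \<Rightarrow> nat list" where
  "compl_list r I = sorted_list_of_set ({1..r} - I)"

text \<open>Entry k_{p,q} of the pure diagram pi(r,I) (n fixed).\<close>
definition pure_entry :: "nat \<Rightarrow> nat \<Rightarrow> nat set \<Rightarrow> nat \<Rightarrow> nat \<Rightarrow> real" where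
  "pure_entry n r I p q =
     (let d = compl_list r I in
      if int q \<noteq> int (d ! p) - int p then 0
      else fact (r - n) *
           (\<Prod>l \<in> {0..r-n} - {p}. 1 / \<bar>real (d ! l) - real (d ! p)\<bar>))"

text \<open>Entry k_{p,q} of the Betti table sum_I X_I pi(r,I), for a realization X.\<close>
definition betti_entry :: "nat \<Rightarrow> nat \<Rightarrow> (nat set \<Rightarrow> real) \<Rightarrow> nat \<Rightarrow> nat \<Rightarrow> real" where
  "betti_entry n r X p q = (\<Sum>I \<in> subsets_idx n r. X I * pure_entry n r I p q)"

definition rand_space :: "nat \<Rightarrow> nat \<Rightarrow> (nat set \<Rightarrow> real) measure" where
  "rand_space n r = PiM (subsets_idx n r) (\<lambda>_. uniform_measure lborel {0..1::real})"

definition mu :: "nat \<Rightarrow> nat \<Rightarrow> nat \<Rightarrow> nat \<Rightarrow> real" where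
  "mu n q r p = 1 / 2 ^ n * (real p ^ (q - 1) * real (r - p - n) ^ (n - q))
                  / (fact (q - 1) * fact (n - q))"

end

theory Submission
  imports Defs
begin

text \<open>
  The random Betti entry $k_{p,q}(\mathrm{B}_r) = \sum_I X_I\, w_I$ is a weighted sum of
  independent uniform variables with nonnegative weights $w_I = k_{p,q}(\pi(r,I))$, and the
  theorem is proved by the second moment method.

  (1) Probability: $\mathrm{Var}(\sum_I X_I w_I) \le \frac14 \sum_I w_I^2 \le \frac14
  (\max_I w_I) \sum_I w_I$, so Chebyshev's inequality bounds the relative deviation from any
  normaliser close to the mean $\frac12\sum_I w_I$.
  (2) Combinatorics: with $s = p + q$, the weight $w_I$ is nonzero iff $s \notin I$ and exactly
  $q-1$ elements of $I$ lie below $s$; it then equals $\frac{(r-n)!}{(s-1)!(r-s)!}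
  \prod_{i \in I} |i - s|$. Summing over $I$ gives the elementary symmetric polynomials
  $e_{q-1}(1,\dots,s-1)\, e_{n-q}(1,\dots,r-s)$.
  (3) Asymptotics: $k!\,e_k(1,\dots,m)$ lies between $(m(m+1)/2 - km)^k$ and $(m(m+1)/2)^k$,
  so for central columns the mean is asymptotic to $\binom{r-n}{p}\mu(r,p)$, uniformly in $p$,
  while each single weight is $O(1/r)$ times it.
  Together, the deviation probability is $O(1/r)$ uniformly in $p$, which is the theorem.
\<close>

definition unif01 :: "real measure" where
  "unif01 = uniform_measure lborel {0..1}"

lemma prob_space_unif01: "prob_space unif01"
  unfolding unif01_def by (rule prob_space_uniform_measure) auto

lemma AE_unif01: "AE x in unif01. 0 \<le> x \<and> x \<le> 1"
  unfolding unif01_def by (rule AE_uniform_measureI) auto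

lemma integrable_unif01:
  fixes f :: "real \<Rightarrow> real"
  assumes "f \<in> borel_measurable borel" "\<And>x. 0 \<le> x \<Longrightarrow> x \<le> 1 \<Longrightarrow> \<bar>f x\<bar> \<le> B"
  shows "integrable unif01 f"
proof -
  interpret prob_space unif01 by (rule prob_space_unif01)
  show ?thesis
  proof (rule integrable_const_bound[where B=B])
    show "AE x in unif01. norm (f x) \<le> B"
      using AE_unif01 by eventually_elim (use assms in auto)
    show "f \<in> borel_measurable unif01" using assms(1) unfolding unif01_def by simp
  qed
qed

lemma unif01_mean: "integral\<^sup>L unif01 (\<lambda>x. x) = 1/2"
proof -
  have dens: "unif01 = density lborel (\<lambda>x. ennreal (indicator {0..1} x))"
    unfolding unif01_def uniform_measure_def
    by (intro density_cong) (auto split: split_indicator)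
  have "integral\<^sup>L unif01 (\<lambda>x. x) = (\<integral>x. indicator {0..1} x *\<^sub>R x \<partial>lborel)"
    unfolding dens by (rule integral_density) auto
  also have "\<dots> = (\<integral>x. x * indicator {0..1} x \<partial>lborel)"
    by (intro Bochner_Integration.integral_cong) (auto split: split_indicator)
  also have "\<dots> = 1/2"
  proof (subst integral_FTC_Icc_real)
    fix x :: real
    show "DERIV (\<lambda>x. x\<^sup>2 / 2) x :> x" by (auto intro!: derivative_eq_intros)
  qed (auto simp: power2_eq_square)
  finally show ?thesis .
qed

lemma centred_unif01_bound:
  fixes y :: real assumes "0 \<le> y" "y \<le> 1"
  shows "(y - 1/2) * (y - 1/2) \<le> 1/4"
proof -
  have a: "\<bar>y - 1/2\<bar> \<le> 1/2" unfolding abs_le_iff using assms by auto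
  have "\<bar>y - 1/2\<bar> * \<bar>y - 1/2\<bar> \<le> 1/2 * (1/2)" by (rule mult_mono[OF a a]) auto
  then show ?thesis by (simp add: abs_mult_self_eq)
qed

lemma unif01_variance_le: "integral\<^sup>L unif01 (\<lambda>y. (y - 1/2) * (y - 1/2)) \<le> 1/4"
proof -
  interpret prob_space unif01 by (rule prob_space_unif01)
  have "integral\<^sup>L unif01 (\<lambda>y. (y - 1/2) * (y - 1/2)) \<le> integral\<^sup>L unif01 (\<lambda>y. 1/4)"
  proof (rule integral_mono_AE)
    show "integrable unif01 (\<lambda>y. (y - 1/2) * (y - 1/2))"
      by (rule integrable_unif01[where B=1]) (use centred_unif01_bound in force)+
    show "AE y in unif01. (y - 1/2) * (y - 1/2) \<le> 1/4"
      using AE_unif01 by eventually_elim (use centred_unif01_bound in auto)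
  qed simp
  then show ?thesis by (simp add: prob_space)
qed

lemma centred_product_moment:
  assumes S: "finite S" "I \<in> S" "J \<in> S"
  shows "integrable (PiM S (\<lambda>_. unif01)) (\<lambda>X. (X I - 1/2) * (X J - 1/2))"
    and "integral\<^sup>L (PiM S (\<lambda>_. unif01)) (\<lambda>X. (X I - 1/2) * (X J - 1/2)) =
       (if I = J then integral\<^sup>L unif01 (\<lambda>y. (y - 1/2) * (y - 1/2)) else 0)"
proof -
  interpret product_sigma_finite "\<lambda>_. unif01"
    unfolding product_sigma_finite_def by (simp add: prob_space_imp_sigma_finite prob_space_unif01)
  text \<open>Write the integrand as a product of one factor per coordinate.\<close>
  define \<phi> where "\<phi> K y = (if K = I then y - 1/2 else 1) * (if K = J then y - 1/2 else (1::real))"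
    for K y
  have prod_eq: "(X I - 1/2) * (X J - 1/2) = (\<Prod>K\<in>S. \<phi> K (X K))" for X :: "'a \<Rightarrow> real"
    using S by (simp add: \<phi>_def prod.distrib)
  have \<phi>_int: "integrable unif01 (\<phi> K)" for K
  proof (rule integrable_unif01[where B=1])
    fix y :: real assume "0 \<le> y" "y \<le> 1"
    then have le1: "\<bar>y - 1/2\<bar> \<le> 1" by auto
    then have "\<bar>y - 1/2\<bar> * \<bar>y - 1/2\<bar> \<le> 1" by (intro mult_le_one) auto
    with le1 show "\<bar>\<phi> K y\<bar> \<le> 1" unfolding \<phi>_def abs_mult by auto
  qed (unfold \<phi>_def, measurable)
  have \<phi>_integral: "integral\<^sup>L unif01 (\<phi> K) =
      (if K = I \<and> K = J then integral\<^sup>L unif01 (\<lambda>y. (y - 1/2) * (y - 1/2))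
       else if K = I \<or> K = J then 0 else 1)" for K
  proof -
    interpret prob_space unif01 by (rule prob_space_unif01)
    have "integrable unif01 (\<lambda>y. y)" by (rule integrable_unif01[where B=1]) auto
    then have "integral\<^sup>L unif01 (\<lambda>y. y - 1/2) = 0" using unif01_mean by (simp add: prob_space)
    then show ?thesis unfolding \<phi>_def by (auto simp: prob_space)
  qed
  show "integrable (PiM S (\<lambda>_. unif01)) (\<lambda>X. (X I - 1/2) * (X J - 1/2))"
    unfolding prod_eq by (rule product_integrable_prod) (use S \<phi>_int in auto)
  have "integral\<^sup>L (PiM S (\<lambda>_. unif01)) (\<lambda>X. (X I - 1/2) * (X J - 1/2)) =
      (\<Prod>K\<in>S. integral\<^sup>L unif01 (\<phi> K))"
    unfolding prod_eq by (rule product_integral_prod) (use S \<phi>_int in auto)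
  also have "\<dots> = (if I = J then integral\<^sup>L unif01 (\<lambda>y. (y - 1/2) * (y - 1/2)) else 0)"
  proof (cases "I = J")
    case True
    then show ?thesis unfolding \<phi>_integral using S by (simp add: if_distrib cong: if_cong)
  next
    case False
    then have "integral\<^sup>L unif01 (\<phi> I) = 0" by (simp add: \<phi>_integral)
    then show ?thesis using S False by (simp add: prod_zero_iff) blast
  qed
  finally show "integral\<^sup>L (PiM S (\<lambda>_. unif01)) (\<lambda>X. (X I - 1/2) * (X J - 1/2)) =
      (if I = J then integral\<^sup>L unif01 (\<lambda>y. (y - 1/2) * (y - 1/2)) else 0)" .
qed

lemma weighted_sum_second_moment:
  fixes w :: "'i \<Rightarrow> real"
  assumes S: "finite S"
  defines "g \<equiv> \<lambda>X. (\<Sum>I\<in>S. w I * (X I - 1/2))"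
  shows "integrable (PiM S (\<lambda>_. unif01)) (\<lambda>X. g X ^ 2)"
    and "integral\<^sup>L (PiM S (\<lambda>_. unif01)) (\<lambda>X. g X ^ 2) \<le> (\<Sum>I\<in>S. (w I)^2) / 4"
proof -
  let ?M = "PiM S (\<lambda>_. unif01)"
  define v where "v = integral\<^sup>L unif01 (\<lambda>y. (y - 1/2) * (y - 1/2))"
  have expand: "g X ^ 2 = (\<Sum>I\<in>S. \<Sum>J\<in>S. w I * w J * ((X I - 1/2) * (X J - 1/2)))" for X
    unfolding g_def power2_eq_square sum_product by (simp add: algebra_simps)
  have int_IJ: "integrable ?M (\<lambda>X. w I * w J * ((X I - 1/2) * (X J - 1/2)))"
    if "I \<in> S" "J \<in> S" for I J
    using centred_product_moment(1)[OF S that] by simp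
  show "integrable ?M (\<lambda>X. g X ^ 2)"
    unfolding expand using int_IJ by (intro Bochner_Integration.integrable_sum) auto
  have "integral\<^sup>L ?M (\<lambda>X. g X ^ 2) =
      (\<Sum>I\<in>S. \<Sum>J\<in>S. w I * w J * integral\<^sup>L ?M (\<lambda>X. (X I - 1/2) * (X J - 1/2)))"
    unfolding expand using int_IJ
    by (simp add: Bochner_Integration.integral_sum Bochner_Integration.integrable_sum)
  also have "\<dots> = (\<Sum>I\<in>S. \<Sum>J\<in>S. w I * w J * (if I = J then v else 0))"
    using centred_product_moment(2)[OF S] unfolding v_def by (intro sum.cong refl) auto
  also have "\<dots> = (\<Sum>I\<in>S. (w I)^2 * v)"
    using S by (simp add: power2_eq_square if_distrib cong: if_cong)
  also have "\<dots> \<le> (\<Sum>I\<in>S. (w I)^2 * (1/4))"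
    using unif01_variance_le unfolding v_def by (intro sum_mono mult_left_mono) auto
  finally show "integral\<^sup>L ?M (\<lambda>X. g X ^ 2) \<le> (\<Sum>I\<in>S. (w I)^2) / 4"
    by (simp add: sum_divide_distrib)
qed

lemma weighted_uniform_sum_deviation:
  fixes w :: "'i \<Rightarrow> real"
  assumes S: "finite S" and w: "\<And>I. I \<in> S \<Longrightarrow> 0 \<le> w I \<and> w I \<le> B"
    and N: "0 < N" and \<epsilon>: "0 < \<epsilon>" and mean: "\<bar>(\<Sum>I\<in>S. w I) / 2 - N\<bar> \<le> \<epsilon> / 2 * N"
  shows "measure (PiM S (\<lambda>_. unif01))
           {X \<in> space (PiM S (\<lambda>_. unif01)). \<epsilon> < \<bar>(\<Sum>I\<in>S. X I * w I) / N - 1\<bar>}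
         \<le> B * (\<Sum>I\<in>S. w I) / (\<epsilon>^2 * N^2)"
proof -
  let ?M = "PiM S (\<lambda>_. unif01)"
  interpret P: prob_space ?M by (rule prob_space_PiM) (rule prob_space_unif01)
  define g where "g X = (\<Sum>I\<in>S. w I * (X I - 1/2))" for X :: "'i \<Rightarrow> real"
  define t where "t = \<epsilon> * N / 2"
  have t: "0 < t" unfolding t_def using \<epsilon> N by simp
  have g_eq: "g X = (\<Sum>I\<in>S. X I * w I) - (\<Sum>I\<in>S. w I) / 2" for X
    unfolding g_def by (simp add: sum_subtractf sum_divide_distrib algebra_simps)
  have coord: "(\<lambda>X. X I) \<in> borel_measurable ?M" if "I \<in> S" for I
  proof -
    have "(\<lambda>X. X I) \<in> measurable ?M unif01"
      by (rule measurable_component_singleton) (use that in auto)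
    moreover have "sets unif01 = sets borel" unfolding unif01_def by simp
    ultimately show ?thesis using measurable_cong_sets[of ?M ?M unif01 borel] by simp
  qed
  have g_meas: "g \<in> borel_measurable ?M"
    unfolding g_def by (intro borel_measurable_sum borel_measurable_times borel_measurable_diff coord) auto
  text \<open>A deviation of more than $\varepsilon N$ from $N$ is a deviation of at least
    $t = \varepsilon N/2$ from the mean.\<close>
  have "{X \<in> space ?M. \<epsilon> < \<bar>(\<Sum>I\<in>S. X I * w I) / N - 1\<bar>} \<subseteq> {X \<in> space ?M. t \<le> \<bar>g X\<bar>}"
  proof safe
    fix X assume "\<epsilon> < \<bar>(\<Sum>I\<in>S. X I * w I) / N - 1\<bar>"
    moreover have "\<bar>(\<Sum>I\<in>S. X I * w I) / N - 1\<bar> = \<bar>(\<Sum>I\<in>S. X I * w I) - N\<bar> / N"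
      using N by (simp add: field_simps)
    ultimately have "\<epsilon> * N < \<bar>(\<Sum>I\<in>S. X I * w I) - N\<bar>"
      using N by (simp add: pos_less_divide_eq)
    then show "t \<le> \<bar>g X\<bar>" using mean unfolding g_eq t_def by linarith
  qed
  then have "measure ?M {X \<in> space ?M. \<epsilon> < \<bar>(\<Sum>I\<in>S. X I * w I) / N - 1\<bar>}
      \<le> measure ?M {X \<in> space ?M. t \<le> \<bar>g X\<bar>}"
    using g_meas by (intro P.finite_measure_mono) auto
  also have "\<dots> \<le> integral\<^sup>L ?M (\<lambda>X. g X ^ 2) / t^2"
    using weighted_sum_second_moment(1)[OF S, of w]
    by (intro P.second_moment_method[OF g_meas _ t]) (simp add: g_def)
  also have "\<dots> \<le> (\<Sum>I\<in>S. (w I)^2) / 4 / t^2"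
    using weighted_sum_second_moment(2)[OF S, of w]
    by (intro divide_right_mono) (simp_all add: g_def)
  also have "\<dots> \<le> (\<Sum>I\<in>S. B * w I) / 4 / t^2"
  proof -
    have "(w I)^2 \<le> B * w I" if "I \<in> S" for I
      using w[OF that] by (simp add: power2_eq_square mult_right_mono)
    then show ?thesis by (intro divide_right_mono sum_mono) auto
  qed
  also have "\<dots> = B * (\<Sum>I\<in>S. w I) / (\<epsilon>^2 * N^2)"
    unfolding t_def sum_distrib_left[symmetric] by (simp add: power_mult_distrib power_divide)
  finally show ?thesis .
qed

lemma sorted_nth_rank:
  fixes xs :: "nat list"
  assumes "sorted_wrt (<) xs" "j < length xs"
  shows "card {y \<in> set xs. y < xs ! j} = j"
proof -
  have "{y \<in> set xs. y < xs ! j} = (\<lambda>i. xs ! i) ` {..<j}"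
  proof (intro set_eqI iffI)
    fix y assume "y \<in> {y \<in> set xs. y < xs ! j}"
    then obtain i where i: "i < length xs" "y = xs ! i" "y < xs ! j" by (auto simp: in_set_conv_nth)
    have "i < j"
    proof (rule ccontr)
      assume "\<not> i < j"
      then have "j = i \<or> j < i" by auto
      then show False using sorted_wrt_nth_less[OF assms(1), of j i] i by auto
    qed
    then show "y \<in> (\<lambda>i. xs ! i) ` {..<j}" using i by auto
  next
    fix y assume "y \<in> (\<lambda>i. xs ! i) ` {..<j}"
    then obtain i where "i < j" "y = xs ! i" by auto
    then show "y \<in> {y \<in> set xs. y < xs ! j}"
      using sorted_wrt_nth_less[OF assms(1), of i j] assms by auto
  qed
  moreover have "inj_on (\<lambda>i. xs ! i) {..<j}"
    using assms by (intro inj_on_nth) (auto simp: strict_sorted_iff)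
  ultimately show ?thesis by (simp add: card_image)
qed

lemma sorted_nth_eq_iff_rank:
  fixes xs :: "nat list"
  assumes sorted: "sorted_wrt (<) xs" and p: "p < length xs"
  shows "xs ! p = x \<longleftrightarrow> x \<in> set xs \<and> card {y \<in> set xs. y < x} = p"
proof
  assume "xs ! p = x"
  then show "x \<in> set xs \<and> card {y \<in> set xs. y < x} = p"
    using sorted_nth_rank[OF sorted p] p by auto
next
  assume x: "x \<in> set xs \<and> card {y \<in> set xs. y < x} = p"
  then obtain j where j: "j < length xs" "xs ! j = x" by (auto simp: in_set_conv_nth)
  then show "xs ! p = x" using sorted_nth_rank[OF sorted j(1)] x by simp
qed

lemma finite_subsets_idx: "finite (subsets_idx n r)"
  by (rule finite_subset[of _ "Pow {1..r}"]) (auto simp: subsets_idx_def)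

lemma compl_list_facts:
  assumes I: "I \<in> subsets_idx n r" and n: "1 \<le> n" "n \<le> r"
  shows "sorted_wrt (<) (compl_list r I)" "set (compl_list r I) = {1..r} - I"
    "length (compl_list r I) = r - n + 1"
proof -
  have Isub: "I \<subseteq> {1..r}" and cI: "card I = n - 1" using I by (auto simp: subsets_idx_def)
  have "finite I" using Isub finite_subset by blast
  then have "card ({1..r} - I) = r - n + 1" using Isub cI n by (simp add: card_Diff_subset)
  then show "sorted_wrt (<) (compl_list r I)" "set (compl_list r I) = {1..r} - I"
    "length (compl_list r I) = r - n + 1"
    by (simp_all add: compl_list_def)
qed

text \<open>The column condition of a pure diagram: $d_p = p + q$ holds exactly when $p+q$ is not in
  $I$ and exactly $q-1$ elements of $I$ lie below it (the remaining $p$ numbers below $p+q$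
  being $d_0, \dots, d_{p-1}$).\<close>
lemma compl_list_nth_eq_iff:
  assumes I: "I \<in> subsets_idx n r" and n: "1 \<le> n" "n \<le> r" and p: "p \<le> r - n" and q: "1 \<le> q"
  shows "compl_list r I ! p = p + q \<longleftrightarrow>
    p + q \<le> r \<and> p + q \<notin> I \<and> card {i \<in> I. i < p + q} = q - 1"
proof -
  define D where "D = {1..r} - I"
  have Isub: "I \<subseteq> {1..r}" using I by (auto simp: subsets_idx_def)
  have fI: "finite I" using Isub finite_subset by blast
  note d = compl_list_facts[OF I n, folded D_def]
  have split: "card {y \<in> D. y < p + q} + card {i \<in> I. i < p + q} = p + q - 1"
    if "p + q \<le> r" "p + q \<notin> I"
  proof -
    have "{y \<in> D. y < p + q} \<union> {i \<in> I. i < p + q} = {1..<p + q}"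
      unfolding D_def using Isub that by auto
    moreover have "card ({y \<in> D. y < p + q} \<union> {i \<in> I. i < p + q}) =
        card {y \<in> D. y < p + q} + card {i \<in> I. i < p + q}"
      by (rule card_Un_disjoint) (use fI in \<open>auto simp: D_def\<close>)
    ultimately show ?thesis by simp
  qed
  have "compl_list r I ! p = p + q \<longleftrightarrow> p + q \<in> D \<and> card {y \<in> D. y < p + q} = p"
    using sorted_nth_eq_iff_rank[OF d(1)] d(2,3) p by auto
  also have "\<dots> \<longleftrightarrow> p + q \<le> r \<and> p + q \<notin> I \<and> card {i \<in> I. i < p + q} = q - 1"
    using split q unfolding D_def by auto
  finally show ?thesis .
qed

lemma prod_distances_fact:
  assumes "1 \<le> s" "s \<le> r"
  shows "(\<Prod>x\<in>{1..r} - {s}. \<bar>real x - real s\<bar>) = fact (s - 1) * fact (r - s)"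
proof -
  have split: "{1..r} - {s} = {1..<s} \<union> {s<..r}" using assms by auto
  have "(\<Prod>x\<in>{1..<s}. \<bar>real x - real s\<bar>) = (\<Prod>y\<in>{1..s-1}. real y)"
    by (rule prod.reindex_bij_witness[where i="\<lambda>y. s - y" and j="\<lambda>x. s - x"]) auto
  moreover have "(\<Prod>x\<in>{s<..r}. \<bar>real x - real s\<bar>) = (\<Prod>y\<in>{1..r-s}. real y)"
    by (rule prod.reindex_bij_witness[where i="\<lambda>y. y + s" and j="\<lambda>x. x - s"]) auto
  moreover have "(\<Prod>x\<in>{1..<s} \<union> {s<..r}. \<bar>real x - real s\<bar>) =
     (\<Prod>x\<in>{1..<s}. \<bar>real x - real s\<bar>) * (\<Prod>x\<in>{s<..r}. \<bar>real x - real s\<bar>)"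
    by (rule prod.union_disjoint) auto
  ultimately show ?thesis unfolding split by (simp add: fact_prod)
qed

text \<open>The product in the definition of a pure diagram: the distances from $d_p$ to the
  other $d_\ell$ are all distances within $[r]$ except those to elements of $I$.\<close>
lemma compl_list_distance_prod:
  assumes I: "I \<in> subsets_idx n r" and n: "1 \<le> n" "n \<le> r" and p: "p \<le> r - n"
  defines "x \<equiv> compl_list r I ! p"
  shows "(\<Prod>l\<in>{0..r-n} - {p}. 1 / \<bar>real (compl_list r I ! l) - real x\<bar>) =
    (\<Prod>i\<in>I. \<bar>real i - real x\<bar>) / (fact (x - 1) * fact (r - x))"
proof -
  define d where "d = compl_list r I"
  define D where "D = {1..r} - I"
  have Isub: "I \<subseteq> {1..r}" using I by (auto simp: subsets_idx_def)
  have fI: "finite I" using Isub finite_subset by blast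
  note facts = compl_list_facts[OF I n, folded d_def D_def]
  have xD: "x \<in> D" unfolding x_def d_def[symmetric] using facts p nth_mem by fastforce
  then have x: "1 \<le> x" "x \<le> r" "x \<notin> I" unfolding D_def by auto
  have bij: "bij_betw ((!) d) ({..<length d} - {p}) (D - {x})"
    unfolding x_def d_def[symmetric]
    using bij_betw_nth[of d "{..<length d}" D] facts p
    by (intro bij_betw_DiffI) (auto simp: strict_sorted_iff bij_betw_def)
  have "(\<Prod>l\<in>{0..r-n} - {p}. 1 / \<bar>real (d ! l) - real x\<bar>) = (\<Prod>y\<in>D - {x}. 1 / \<bar>real y - real x\<bar>)"
    using prod.reindex_bij_betw[OF bij, of "\<lambda>y. 1 / \<bar>real y - real x\<bar>"] facts
    by (simp add: atLeast0AtMost lessThan_Suc_atMost)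
  also have "\<dots> = 1 / (\<Prod>y\<in>D - {x}. \<bar>real y - real x\<bar>)" by (simp add: prod_dividef)
  also have "\<dots> = (\<Prod>i\<in>I. \<bar>real i - real x\<bar>) / (fact (x - 1) * fact (r - x))"
  proof -
    have split: "{1..r} - {x} = (D - {x}) \<union> I" unfolding D_def using Isub x by auto
    have "(\<Prod>y\<in>(D - {x}) \<union> I. \<bar>real y - real x\<bar>) =
        (\<Prod>y\<in>D - {x}. \<bar>real y - real x\<bar>) * (\<Prod>i\<in>I. \<bar>real i - real x\<bar>)"
      by (rule prod.union_disjoint) (use fI in \<open>auto simp: D_def\<close>)
    then have "(\<Prod>y\<in>D - {x}. \<bar>real y - real x\<bar>) * (\<Prod>i\<in>I. \<bar>real i - real x\<bar>) =
        fact (x - 1) * fact (r - x)"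
      using prod_distances_fact[OF x(1,2)] unfolding split by simp
    moreover have "(\<Prod>i\<in>I. \<bar>real i - real x\<bar>) > 0" using x by (intro prod_pos) auto
    ultimately have "(\<Prod>y\<in>D - {x}. \<bar>real y - real x\<bar>) =
        fact (x - 1) * fact (r - x) / (\<Prod>i\<in>I. \<bar>real i - real x\<bar>)"
      by (simp add: eq_divide_eq)
    then show ?thesis by simp
  qed
  finally show ?thesis unfolding d_def .
qed

lemma pure_entry_eval:
  assumes I: "I \<in> subsets_idx n r" and n: "1 \<le> n" "n \<le> r" and p: "p \<le> r - n" and q: "1 \<le> q"
  shows "pure_entry n r I p q =
    (if p + q \<le> r \<and> p + q \<notin> I \<and> card {i \<in> I. i < p + q} = q - 1
     then fact (r - n) * (\<Prod>i\<in>I. \<bar>real i - real (p + q)\<bar>) / (fact (p + q - 1) * fact (r - (p + q)))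
     else 0)"
proof -
  have "int q = int (compl_list r I ! p) - int p \<longleftrightarrow> compl_list r I ! p = p + q" by auto
  then show ?thesis
    using compl_list_nth_eq_iff[OF assms] compl_list_distance_prod[OF I n p]
    unfolding pure_entry_def Let_def by auto
qed

definition esym :: "nat \<Rightarrow> 'a set \<Rightarrow> ('a \<Rightarrow> real) \<Rightarrow> real" where
  "esym k A f = (\<Sum>B\<in>{B. B \<subseteq> A \<and> card B = k}. \<Prod>b\<in>B. f b)"

lemma esym_0: "finite A \<Longrightarrow> esym 0 A f = 1"
proof -
  assume "finite A"
  then have "{B. B \<subseteq> A \<and> card B = 0} = {{}}"
    by (auto dest: finite_subset[where B=A] simp: card_eq_0_iff)
  then show ?thesis unfolding esym_def by simp
qed

lemma esym_empty: "esym (Suc k) {} f = 0"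
  unfolding esym_def by simp

lemma subsets_card_insert:
  assumes A: "finite A" and x: "x \<notin> A"
  shows "{B. B \<subseteq> insert x A \<and> card B = Suc k} =
    {B. B \<subseteq> A \<and> card B = Suc k} \<union> insert x ` {B. B \<subseteq> A \<and> card B = k}"
proof (intro set_eqI iffI)
  fix B assume B: "B \<in> {B. B \<subseteq> insert x A \<and> card B = Suc k}"
  have fB: "finite B" using B A by (auto intro: finite_subset)
  show "B \<in> {B. B \<subseteq> A \<and> card B = Suc k} \<union> insert x ` {B. B \<subseteq> A \<and> card B = k}"
  proof (cases "x \<in> B")
    case True
    then have "B = insert x (B - {x})" by auto
    moreover have "B - {x} \<in> {B. B \<subseteq> A \<and> card B = k}" using B True fB by auto
    ultimately show ?thesis by blast
  next
    case False then show ?thesis using B by auto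
  qed
next
  fix B assume "B \<in> {B. B \<subseteq> A \<and> card B = Suc k} \<union> insert x ` {B. B \<subseteq> A \<and> card B = k}"
  moreover have "insert x C \<in> {B. B \<subseteq> insert x A \<and> card B = Suc k}" if "C \<subseteq> A" "card C = k" for C
  proof -
    have "finite C" "x \<notin> C" using that A x by (auto intro: finite_subset)
    then show ?thesis using that by auto
  qed
  ultimately show "B \<in> {B. B \<subseteq> insert x A \<and> card B = Suc k}" by auto
qed

lemma esym_insert:
  assumes A: "finite A" and x: "x \<notin> A"
  shows "esym (Suc k) (insert x A) f = esym (Suc k) A f + f x * esym k A f"
proof -
  let ?P = "{B. B \<subseteq> A \<and> card B = Suc k}" and ?Q = "{B. B \<subseteq> A \<and> card B = k}"
  have inj: "inj_on (insert x) ?Q" using x by (auto simp: inj_on_def)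
  have "esym (Suc k) (insert x A) f = (\<Sum>B\<in>?P. \<Prod>b\<in>B. f b) + (\<Sum>B\<in>insert x ` ?Q. \<Prod>b\<in>B. f b)"
    unfolding esym_def subsets_card_insert[OF A x] using A x by (intro sum.union_disjoint) auto
  also have "(\<Sum>B\<in>insert x ` ?Q. \<Prod>b\<in>B. f b) = (\<Sum>C\<in>?Q. \<Prod>b\<in>insert x C. f b)"
    by (rule sum.reindex[OF inj, unfolded comp_def])
  also have "\<dots> = (\<Sum>C\<in>?Q. f x * (\<Prod>b\<in>C. f b))"
  proof (rule sum.cong[OF refl])
    fix C assume "C \<in> ?Q"
    then have "finite C" "x \<notin> C" using A x by (auto intro: finite_subset)
    then show "(\<Prod>b\<in>insert x C. f b) = f x * (\<Prod>b\<in>C. f b)" by simp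
  qed
  finally show ?thesis unfolding esym_def by (simp add: sum_distrib_left)
qed

lemma bernoulli_lower:
  fixes a b :: real assumes "0 \<le> a" "0 \<le> b"
  shows "a ^ Suc j + real (Suc j) * b * a ^ j \<le> (a + b) ^ Suc j"
proof (induction j)
  case 0 then show ?case by simp
next
  case (Suc j)
  have "(a + b) ^ Suc (Suc j) = (a + b) * (a + b) ^ Suc j" by simp
  also have "\<dots> \<ge> (a + b) * (a ^ Suc j + real (Suc j) * b * a ^ j)"
    using Suc assms by (intro mult_left_mono) auto
  finally have "(a + b) ^ Suc (Suc j) \<ge> (a + b) * (a ^ Suc j + real (Suc j) * b * a ^ j)" .
  moreover have "(a + b) * (a ^ Suc j + real (Suc j) * b * a ^ j) =
      a ^ Suc (Suc j) + real (Suc (Suc j)) * b * a ^ Suc j + real (Suc j) * b * b * a ^ j"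
    by (simp add: algebra_simps)
  moreover have "0 \<le> real (Suc j) * b * b * a ^ j" using assms by simp
  ultimately show ?case by linarith
qed

lemma pow_diff_upper:
  fixes x y :: real assumes "0 \<le> x" "x \<le> y"
  shows "y ^ Suc j \<le> x ^ Suc j + real (Suc j) * (y - x) * y ^ j"
proof (induction j)
  case 0 then show ?case by simp
next
  case (Suc j)
  have "y ^ Suc (Suc j) - x ^ Suc (Suc j) = y * (y ^ Suc j - x ^ Suc j) + x ^ Suc j * (y - x)"
    by (simp add: algebra_simps)
  also have "\<dots> \<le> y * (real (Suc j) * (y - x) * y ^ j) + y ^ Suc j * (y - x)"
    using Suc assms by (intro add_mono mult_left_mono mult_right_mono power_mono) auto
  also have "\<dots> = real (Suc (Suc j)) * (y - x) * y ^ Suc j" by (simp add: algebra_simps)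
  finally show ?case by linarith
qed

lemma power_increment_bound:
  fixes x y e :: real assumes "0 \<le> x" "0 \<le> y" "y - x \<le> e" "0 \<le> e"
  shows "y ^ Suc j \<le> x ^ Suc j + real (Suc j) * e * y ^ j"
proof (cases "x \<le> y")
  case True
  have "y ^ Suc j \<le> x ^ Suc j + real (Suc j) * (y - x) * y ^ j" by (rule pow_diff_upper) (use assms True in auto)
  also have "\<dots> \<le> x ^ Suc j + real (Suc j) * e * y ^ j"
    using assms by (intro add_left_mono mult_right_mono mult_left_mono) auto
  finally show ?thesis .
next
  case False
  then have "y ^ Suc j \<le> x ^ Suc j" using assms by (intro power_mono) auto
  moreover have "0 \<le> real (Suc j) * e * y ^ j" using assms by simp
  ultimately show ?thesis by linarith
qed

text \<open>The upper bound counts every product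
  $k!$ times in $\Sigma^k$; the lower one follows by induction from the recursion.\<close>
lemma esym_upper:
  assumes "finite A" "\<And>x. x \<in> A \<Longrightarrow> 0 \<le> f x"
  shows "fact k * esym k A f \<le> (\<Sum>x\<in>A. f x) ^ k"
  using assms
proof (induction A arbitrary: k rule: finite_induct)
  case empty then show ?case by (cases k) (auto simp: esym_0 esym_empty)
next
  case (insert x A)
  show ?case
  proof (cases k)
    case 0 then show ?thesis using insert by (simp add: esym_0)
  next
    case (Suc j)
    let ?S = "\<Sum>x\<in>A. f x"
    have S0: "0 \<le> ?S" using insert by (intro sum_nonneg) auto
    have fx: "0 \<le> f x" using insert by auto
    have IH1: "fact (Suc j) * esym (Suc j) A f \<le> ?S ^ Suc j" by (rule insert.IH) (use insert.prems in auto)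
    have IH2: "fact j * esym j A f \<le> ?S ^ j" by (rule insert.IH) (use insert.prems in auto)
    have "fact (Suc j) * esym (Suc j) (insert x A) f =
        fact (Suc j) * esym (Suc j) A f + real (Suc j) * f x * (fact j * esym j A f)"
      using insert by (simp add: esym_insert algebra_simps)
    also have "\<dots> \<le> ?S ^ Suc j + real (Suc j) * f x * ?S ^ j"
      using IH1 IH2 fx by (intro add_mono mult_left_mono) auto
    also have "\<dots> \<le> (?S + f x) ^ Suc j" by (rule bernoulli_lower[OF S0 fx])
    finally show ?thesis using insert Suc by (simp add: add.commute)
  qed
qed

lemma esym_lower:
  assumes "finite A" "\<And>x. x \<in> A \<Longrightarrow> 0 \<le> f x" "\<And>x. x \<in> A \<Longrightarrow> f x \<le> D" "0 \<le> D"
  shows "(max 0 ((\<Sum>x\<in>A. f x) - real k * D)) ^ k \<le> fact k * esym k A f"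
  using assms
proof (induction A arbitrary: k rule: finite_induct)
  case empty then show ?case by (cases k) (auto simp: esym_0 esym_empty)
next
  case (insert x A)
  show ?case
  proof (cases k)
    case 0 then show ?thesis using insert by (simp add: esym_0)
  next
    case (Suc j)
    let ?S = "\<Sum>x\<in>A. f x"
    define Lk where "Lk = max 0 (?S - real (Suc j) * D)"
    define Lj where "Lj = max 0 (?S - real j * D)"
    define Lnew where "Lnew = max 0 ((?S + f x) - real (Suc j) * D)"
    have fx: "0 \<le> f x" "f x \<le> D" using insert by auto
    have IH1: "Lk ^ Suc j \<le> fact (Suc j) * esym (Suc j) A f"
      unfolding Lk_def by (rule insert.IH) (use insert.prems in auto)
    have IH2: "Lj ^ j \<le> fact j * esym j A f"
      unfolding Lj_def by (rule insert.IH) (use insert.prems in auto)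
    have new_le: "Lnew \<le> Lj" using fx unfolding Lnew_def Lj_def by (auto simp: algebra_simps)
    have "Lnew ^ Suc j \<le> Lk ^ Suc j + real (Suc j) * f x * Lnew ^ j"
      by (rule power_increment_bound) (use fx in \<open>auto simp: Lk_def Lnew_def\<close>)
    also have "\<dots> \<le> Lk ^ Suc j + real (Suc j) * f x * Lj ^ j"
      using new_le fx by (intro add_left_mono mult_left_mono power_mono) (auto simp: Lnew_def)
    also have "\<dots> \<le> fact (Suc j) * esym (Suc j) A f + real (Suc j) * f x * (fact j * esym j A f)"
      using IH1 IH2 fx by (intro add_mono mult_left_mono) auto
    also have "\<dots> = fact (Suc j) * esym (Suc j) (insert x A) f"
      using insert by (simp add: esym_insert algebra_simps)
    finally show ?thesis using insert Suc unfolding Lnew_def by (simp add: add.commute)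
  qed
qed

lemma esym_reindex:
  assumes h: "bij_betw h A B" and g: "\<And>x. x \<in> A \<Longrightarrow> g x = f (h x)"
  shows "esym k B f = esym k A g"
proof -
  let ?P = "{C. C \<subseteq> A \<and> card C = k}" and ?Q = "{C. C \<subseteq> B \<and> card C = k}"
  have inj: "inj_on h A" and img: "h ` A = B" using h by (auto simp: bij_betw_def)
  have "bij_betw (image h) ?P ?Q"
  proof (rule bij_betw_subset[OF bij_betw_Pow[OF h]])
    show "?P \<subseteq> Pow A" by auto
    show "image h ` ?P = ?Q"
    proof (intro set_eqI iffI)
      fix C' assume "C' \<in> image h ` ?P"
      then show "C' \<in> ?Q" using inj img by (auto simp: card_image inj_on_subset)
    next
      fix C' assume C': "C' \<in> ?Q"
      then obtain C where "C \<subseteq> A" "C' = h ` C"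
        using img by (metis subset_image_iff mem_Collect_eq)
      then show "C' \<in> image h ` ?P" using C' inj by (auto simp: card_image inj_on_subset)
    qed
  qed
  then have "esym k B f = (\<Sum>C\<in>?P. \<Prod>b\<in>h ` C. f b)"
    unfolding esym_def by (rule sum.reindex_bij_betw[symmetric])
  also have "\<dots> = esym k A g"
    unfolding esym_def using inj g
    by (intro sum.cong refl) (auto simp: prod.reindex inj_on_subset subset_iff intro!: prod.cong)
  finally show ?thesis .
qed

lemma fact_shift_bounds:
  "real a ^ k * fact a \<le> (fact (a + k) :: real)" "(fact (a + k) :: real) \<le> real (a + k) ^ k * fact a"
proof -
  have "real a ^ k * fact a \<le> (fact (a + k) :: real) \<and> (fact (a + k) :: real) \<le> real (a + k) ^ k * fact a"
  proof (induction k)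
    case (Suc k)
    have "real a ^ Suc k * fact a = real a * (real a ^ k * fact a)" by simp
    also have "\<dots> \<le> real (a + k + 1) * fact (a + k)" using Suc by (intro mult_mono) auto
    also have "\<dots> = fact (a + Suc k)" by simp
    finally have lower: "real a ^ Suc k * fact a \<le> (fact (a + Suc k) :: real)" .
    have "(fact (a + Suc k) :: real) = real (a + k + 1) * fact (a + k)" by simp
    also have "\<dots> \<le> real (a + k + 1) * (real (a + k) ^ k * fact a)"
      using Suc by (intro mult_left_mono) auto
    also have "\<dots> \<le> real (a + k + 1) * (real (a + Suc k) ^ k * fact a)"
      by (intro mult_left_mono mult_right_mono power_mono) auto
    also have "\<dots> = real (a + Suc k) ^ Suc k * fact a" by simp
    finally show ?case using lower by simp
  qed simp
  then show "real a ^ k * fact a \<le> (fact (a + k) :: real)"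
    "(fact (a + k) :: real) \<le> real (a + k) ^ k * fact a" by auto
qed

lemma esym_upto_bounds:
  "(max 0 (real m * (real m + 1) / 2 - real k * real m)) ^ k \<le> fact k * esym k {1..m} real"
  "fact k * esym k {1..m} real \<le> (real m * (real m + 1) / 2) ^ k"
proof -
  have sum: "(\<Sum>x\<in>{1..m}. real x) = real m * (real m + 1) / 2"
    using double_gauss_sum_from_Suc_0[of m, where 'a=real] by simp
  show "(max 0 (real m * (real m + 1) / 2 - real k * real m)) ^ k \<le> fact k * esym k {1..m} real"
    using esym_lower[of "{1..m}" real "real m" k] unfolding sum by auto
  show "fact k * esym k {1..m} real \<le> (real m * (real m + 1) / 2) ^ k"
    using esym_upper[of "{1..m}" real k] unfolding sum by auto
qed

text \<open>Since $e_k(1,\dots,m) \sim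
  (m^2/2)^k / k!$, it tends to $1$ as $a \to \infty$; it is the factor by which the expected
  Betti number differs from its asymptotic value on each side of the column.\<close>
definition esym_ratio :: "nat \<Rightarrow> nat \<Rightarrow> real" where
  "esym_ratio k a = esym k {1..a+k} real * fact a * 2 ^ k * fact k / (fact (a + k) * real a ^ k)"

text \<open>The bounds on $e_k(1,\dots,a+k)$ translate into explicit bounds on the normalised
  quantity, using $a^k \le (a+k)!/a! \le (a+k)^k$.\<close>
lemma esym_ratio_upper:
  assumes a: "0 < a"
  shows "esym_ratio k a \<le> ((real a + real k) * (real a + real k + 1) / (real a)^2) ^ k"
proof -
  define e where "e = esym k {1..a+k} real"
  define S where "S = real (a + k) * (real (a + k) + 1) / 2"
  have e: "fact k * e \<le> S ^ k" unfolding e_def S_def by (rule esym_upto_bounds(2))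
  have fl: "real a ^ k * fact a \<le> (fact (a + k) :: real)" by (rule fact_shift_bounds(1))
  have pos: "0 < real a ^ k * fact a" using a by simp
  have "esym_ratio k a = (fact k * e) * 2 ^ k * fact a / (fact (a + k) * real a ^ k)"
    unfolding esym_ratio_def e_def by (simp add: algebra_simps)
  also have "\<dots> \<le> S ^ k * 2 ^ k * fact a / (fact (a + k) * real a ^ k)"
    using e a by (intro divide_right_mono mult_right_mono) auto
  also have "\<dots> \<le> S ^ k * 2 ^ k * fact a / (real a ^ k * fact a * real a ^ k)"
    using fl pos a unfolding S_def by (intro divide_left_mono mult_right_mono mult_pos_pos) auto
  also have "\<dots> = ((2 * S) / (real a)^2) ^ k"
    by (simp add: power_divide power_mult_distrib power2_eq_square)
  also have "2 * S = (real a + real k) * (real a + real k + 1)" unfolding S_def by simp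
  finally show ?thesis .
qed

lemma esym_ratio_lower:
  assumes a: "0 < a" "2 * k \<le> a"
  shows "((real a - real k) / real a) ^ k \<le> esym_ratio k a"
proof -
  define e where "e = esym k {1..a+k} real"
  define T where "T = real (a + k) * (real (a + k) + 1) / 2 - real k * real (a + k)"
  have T: "2 * T = real (a + k) * (real a + 1 - real k)" unfolding T_def by (simp add: algebra_simps)
  have "0 \<le> real (a + k) * (real a + 1 - real k)" using a by simp
  then have T0: "0 \<le> T" using T by simp
  have e: "T ^ k \<le> fact k * e"
    using esym_upto_bounds(1)[of "a + k" k] T0 unfolding e_def T_def by simp
  have fu: "(fact (a + k) :: real) \<le> real (a + k) ^ k * fact a" by (rule fact_shift_bounds(2))
  have "((real a - real k) / real a) ^ k \<le> ((2 * T) / (real (a + k) * real a)) ^ k"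
  proof (intro power_mono)
    show "0 \<le> (real a - real k) / real a" using a by auto
    have "(real a - real k) / real a \<le> (real a + 1 - real k) / real a"
      using a by (intro divide_right_mono) auto
    also have "\<dots> = (2 * T) / (real (a + k) * real a)" unfolding T using a by simp
    finally show "(real a - real k) / real a \<le> (2 * T) / (real (a + k) * real a)" .
  qed
  also have "\<dots> = T ^ k * 2 ^ k * fact a / (real (a + k) ^ k * fact a * real a ^ k)"
    by (simp add: power_divide power_mult_distrib)
  also have "\<dots> \<le> T ^ k * 2 ^ k * fact a / (fact (a + k) * real a ^ k)"
    using fu T0 a by (intro divide_left_mono mult_right_mono mult_pos_pos) auto
  also have "\<dots> \<le> (fact k * e) * 2 ^ k * fact a / (fact (a + k) * real a ^ k)"
    using e a by (intro divide_right_mono mult_right_mono) auto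
  also have "\<dots> = esym_ratio k a" unfolding esym_ratio_def e_def by (simp add: algebra_simps)
  finally show ?thesis .
qed

lemma esym_ratio_tendsto: "esym_ratio k \<longlonglongrightarrow> 1"
proof (rule tendsto_sandwich)
  have "(\<lambda>a::nat. (1 - real k / real a) ^ k) \<longlonglongrightarrow> (1 - 0) ^ k"
    by (intro tendsto_intros)
  moreover have "\<forall>\<^sub>F a in sequentially. (1 - real k / real a) ^ k = ((real a - real k) / real a) ^ k"
    using eventually_gt_at_top[of 0] by eventually_elim (simp add: field_simps)
  ultimately show "(\<lambda>a. ((real a - real k) / real a) ^ k) \<longlonglongrightarrow> 1" by (simp add: tendsto_cong)
  have "(\<lambda>a::nat. ((1 + real k / real a) * (1 + (real k + 1) / real a)) ^ k)
      \<longlonglongrightarrow> ((1 + 0) * (1 + 0)) ^ k"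
    by (intro tendsto_intros)
  moreover have "\<forall>\<^sub>F a in sequentially. ((1 + real k / real a) * (1 + (real k + 1) / real a)) ^ k =
      ((real a + real k) * (real a + real k + 1) / (real a)^2) ^ k"
    using eventually_gt_at_top[of 0] by eventually_elim (simp add: field_simps power2_eq_square)
  ultimately show "(\<lambda>a. ((real a + real k) * (real a + real k + 1) / (real a)^2) ^ k) \<longlonglongrightarrow> 1"
    by (simp add: tendsto_cong)
  show "\<forall>\<^sub>F a in sequentially. ((real a - real k) / real a) ^ k \<le> esym_ratio k a"
    using eventually_ge_at_top[of "2 * k + 1"] by eventually_elim (rule esym_ratio_lower; simp)
  show "\<forall>\<^sub>F a in sequentially. esym_ratio k a \<le> ((real a + real k) * (real a + real k + 1) / (real a)^2) ^ k"
    using eventually_gt_at_top[of 0] by eventually_elim (rule esym_ratio_upper)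
qed

lemma split_at_bij:
  assumes q: "1 \<le> q" "q \<le> n" and s: "s \<le> r"
  shows "bij_betw (\<lambda>(A, B). A \<union> B)
     ({A. A \<subseteq> {1..<s} \<and> card A = q - 1} \<times> {B. B \<subseteq> {s<..r} \<and> card B = n - q})
     {I \<in> subsets_idx n r. s \<notin> I \<and> card {i \<in> I. i < s} = q - 1}"
    (is "bij_betw _ (?P \<times> ?Q) ?V")
proof -
  have card_union: "card (A \<union> B) = card A + card B" if "A \<subseteq> {1..<s}" "B \<subseteq> {s<..r}" for A B
    using that by (intro card_Un_disjoint) (auto intro: finite_subset, fastforce)
  have join: "A \<union> B \<in> ?V" if A: "A \<in> ?P" and B: "B \<in> ?Q" for A B
  proof -
    have "{i \<in> A \<union> B. i < s} = A" using A B by auto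
    then show ?thesis using A B s q card_union[of A B] by (auto simp: subsets_idx_def)
  qed
  have split: "{i \<in> I. i < s} \<in> ?P \<and> {i \<in> I. s < i} \<in> ?Q" if I: "I \<in> ?V" for I
  proof -
    have "I = {i \<in> I. i < s} \<union> {i \<in> I. s < i}"
      using I by (auto, metis le_neq_implies_less not_less)
    moreover have sub: "{i \<in> I. i < s} \<subseteq> {1..<s}" "{i \<in> I. s < i} \<subseteq> {s<..r}"
      using I by (auto simp: subsets_idx_def)
    ultimately have "card I = card {i \<in> I. i < s} + card {i \<in> I. s < i}"
      using card_union[OF sub] by simp
    then show ?thesis using I q sub by (auto simp: subsets_idx_def)
  qed
  show ?thesis
  proof (rule bij_betw_byWitness[where f' = "\<lambda>I. ({i \<in> I. i < s}, {i \<in> I. s < i})"])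
    show "\<forall>AB \<in> ?P \<times> ?Q. (\<lambda>I. ({i \<in> I. i < s}, {i \<in> I. s < i})) ((\<lambda>(A, B). A \<union> B) AB) = AB"
      by force
    show "\<forall>I \<in> ?V. (\<lambda>(A, B). A \<union> B) ((\<lambda>I. ({i \<in> I. i < s}, {i \<in> I. s < i})) I) = I"
      by (auto, metis le_neq_implies_less not_less)
    show "(\<lambda>(A, B). A \<union> B) ` (?P \<times> ?Q) \<subseteq> ?V" using join by auto
    show "(\<lambda>I. ({i \<in> I. i < s}, {i \<in> I. s < i})) ` ?V \<subseteq> ?P \<times> ?Q" using split by auto
  qed
qed

lemma admissible_sets_sum:
  assumes q: "1 \<le> q" "q \<le> n" and s: "1 \<le> s" "s \<le> r"
  shows "(\<Sum>I \<in> {I \<in> subsets_idx n r. s \<notin> I \<and> card {i \<in> I. i < s} = q - 1}.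
            \<Prod>i\<in>I. \<bar>real i - real s\<bar>) =
         esym (q - 1) {1..s - 1} real * esym (n - q) {1..r - s} real"
proof -
  let ?P = "{A. A \<subseteq> {1..<s} \<and> card A = q - 1}" and ?Q = "{B. B \<subseteq> {s<..r} \<and> card B = n - q}"
  have "(\<Sum>I \<in> {I \<in> subsets_idx n r. s \<notin> I \<and> card {i \<in> I. i < s} = q - 1}.
            \<Prod>i\<in>I. \<bar>real i - real s\<bar>) = (\<Sum>(A, B) \<in> ?P \<times> ?Q. \<Prod>i\<in>A \<union> B. \<bar>real i - real s\<bar>)"
    using sum.reindex_bij_betw[OF split_at_bij[OF q s(2)], of "\<lambda>I. \<Prod>i\<in>I. \<bar>real i - real s\<bar>"]
    by (simp add: case_prod_unfold)
  also have "\<dots> = (\<Sum>A\<in>?P. \<Sum>B\<in>?Q. (\<Prod>i\<in>A. real s - real i) * (\<Prod>i\<in>B. real i - real s))"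
    unfolding sum.cartesian_product[symmetric]
  proof (intro sum.cong refl, clarify)
    fix A B assume A: "A \<subseteq> {1..<s}" and B: "B \<subseteq> {s<..r}"
    then have "(\<Prod>i\<in>A \<union> B. \<bar>real i - real s\<bar>) = (\<Prod>i\<in>A. \<bar>real i - real s\<bar>) * (\<Prod>i\<in>B. \<bar>real i - real s\<bar>)"
      by (intro prod.union_disjoint) (auto intro: finite_subset, fastforce)
    also have "\<dots> = (\<Prod>i\<in>A. real s - real i) * (\<Prod>i\<in>B. real i - real s)"
      using A B by (intro arg_cong2[where f = "(*)"] prod.cong) auto
    finally show "(\<Prod>i\<in>A \<union> B. \<bar>real i - real s\<bar>) = \<dots>" .
  qed
  also have "\<dots> = esym (q - 1) {1..<s} (\<lambda>i. real s - real i) * esym (n - q) {s<..r} (\<lambda>i. real i - real s)"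
    unfolding esym_def by (simp add: sum_product)
  also have "esym (q - 1) {1..<s} (\<lambda>i. real s - real i) = esym (q - 1) {1..s - 1} real"
    by (rule esym_reindex[where h = "\<lambda>y. s - y"]) (auto intro!: bij_betw_byWitness[where f' = "\<lambda>x. s - x"])
  also have "esym (n - q) {s<..r} (\<lambda>i. real i - real s) = esym (n - q) {1..r - s} real"
    by (rule esym_reindex[where h = "\<lambda>y. y + s"]) (auto intro!: bij_betw_byWitness[where f' = "\<lambda>x. x - s"])
  finally show ?thesis .
qed

text \<open>The column $p$, row $q$ entries of all pure diagrams: with $s = p + q$ and
  $K = (r-n)!/((s-1)!\,(r-s)!)$, the entry of $\pi(r,I)$ is $K \prod_{i \in I}|i - s|$ for the
  admissible $I$ and $0$ otherwise.\<close>
lemma pure_entries_column: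
  assumes q: "1 \<le> q" "q \<le> n" and r: "p + n \<le> r"
  defines "K \<equiv> fact (r - n) / (fact (p + (q - 1)) * fact (r - p - n + (n - q))) :: real"
  shows "(\<Sum>I\<in>subsets_idx n r. pure_entry n r I p q) =
      K * (esym (q - 1) {1..p + (q - 1)} real * esym (n - q) {1..r - p - n + (n - q)} real)"
    and "I \<in> subsets_idx n r \<Longrightarrow> 0 \<le> pure_entry n r I p q \<and> pure_entry n r I p q \<le> K * real r ^ (n - 1)"
proof -
  define s where "s = p + q"
  have s: "1 \<le> s" "s \<le> r" "s - 1 = p + (q - 1)" "r - s = r - p - n + (n - q)"
    using q r unfolding s_def by auto
  define V where "V = {I \<in> subsets_idx n r. s \<notin> I \<and> card {i \<in> I. i < s} = q - 1}"
  have entry: "pure_entry n r I p q = (if I \<in> V then K * (\<Prod>i\<in>I. \<bar>real i - real s\<bar>) else 0)"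
    if I: "I \<in> subsets_idx n r" for I
    using pure_entry_eval[OF I _ _ _ q(1)] q r I s unfolding V_def K_def s_def by auto
  have "(\<Sum>I\<in>subsets_idx n r. pure_entry n r I p q) =
      (\<Sum>I\<in>subsets_idx n r. if I \<in> V then K * (\<Prod>i\<in>I. \<bar>real i - real s\<bar>) else 0)"
    using entry by (intro sum.cong) auto
  also have "\<dots> = (\<Sum>I\<in>V. K * (\<Prod>i\<in>I. \<bar>real i - real s\<bar>))"
    unfolding V_def using finite_subsets_idx by (simp add: sum.inter_filter)
  also have "\<dots> = K * (esym (q - 1) {1..s - 1} real * esym (n - q) {1..r - s} real)"
    unfolding V_def sum_distrib_left[symmetric] admissible_sets_sum[OF q s(1,2)] ..
  finally show "(\<Sum>I\<in>subsets_idx n r. pure_entry n r I p q) =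
      K * (esym (q - 1) {1..p + (q - 1)} real * esym (n - q) {1..r - p - n + (n - q)} real)"
    unfolding s .
  assume I: "I \<in> subsets_idx n r"
  then have Isub: "I \<subseteq> {1..r}" and cI: "card I = n - 1" by (auto simp: subsets_idx_def)
  have "(\<Prod>i\<in>I. \<bar>real i - real s\<bar>) \<le> (\<Prod>i\<in>I. real r)"
  proof (intro prod_mono conjI)
    fix i assume "i \<in> I"
    then have "1 \<le> i" "i \<le> r" using Isub by auto
    then show "\<bar>real i - real s\<bar> \<le> real r" using s by auto
  qed simp
  then have "(\<Prod>i\<in>I. \<bar>real i - real s\<bar>) \<le> real r ^ (n - 1)" using cI by simp
  moreover have "0 \<le> K" unfolding K_def by simp
  moreover have "0 \<le> (\<Prod>i\<in>I. \<bar>real i - real s\<bar>)" by (simp add: prod_nonneg)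
  ultimately show "0 \<le> pure_entry n r I p q \<and> pure_entry n r I p q \<le> K * real r ^ (n - 1)"
    using entry[OF I] by (auto intro: mult_left_mono)
qed

definition betti_normaliser :: "nat \<Rightarrow> nat \<Rightarrow> nat \<Rightarrow> nat \<Rightarrow> real" where
  "betti_normaliser n q r p = real ((r - n) choose p) * mu n q r p"

lemma betti_normaliser_pos:
  assumes "0 < p" "p + n < r"
  shows "0 < betti_normaliser n q r p"
  using assms by (simp add: betti_normaliser_def mu_def zero_less_binomial_iff)

lemma mean_over_normaliser:
  assumes q: "1 \<le> q" "q \<le> n" and p: "0 < p" and r: "p + n < r"
  shows "(\<Sum>I\<in>subsets_idx n r. pure_entry n r I p q) / 2 =
    esym_ratio (q - 1) p * esym_ratio (n - q) (r - p - n) * betti_normaliser n q r p"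
proof -
  define k1 k2 b where "k1 = q - 1" and "k2 = n - q" and "b = r - p - n"
  define e1 e2 where "e1 = esym k1 {1..p + k1} real" and "e2 = esym k2 {1..b + k2} real"
  have b: "0 < b" "r - n = p + b" using r unfolding b_def by auto
  have two_pow: "(2::real) ^ n = 2 * 2 ^ k1 * 2 ^ k2"
    using q unfolding k1_def k2_def by (simp flip: power_add power_Suc)
  have "(\<Sum>I\<in>subsets_idx n r. pure_entry n r I p q) =
      fact (p + b) / (fact (p + k1) * fact (b + k2)) * (e1 * e2)"
    using pure_entries_column(1)[OF q] r unfolding k1_def k2_def b_def e1_def e2_def by simp
  moreover have "betti_normaliser n q r p =
      fact (p + b) / (fact p * fact b) * (real p ^ k1 * real b ^ k2) / (2 ^ n * fact k1 * fact k2)"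
    unfolding betti_normaliser_def mu_def k1_def k2_def b_def using b
    by (simp add: binomial_fact b_def) (simp add: add.commute)
  ultimately show ?thesis
    unfolding esym_ratio_def two_pow e1_def[symmetric] e2_def[symmetric] k1_def[symmetric]
      k2_def[symmetric] b_def[symmetric]
    using p b by (simp add: field_simps)
qed

text \<open>This is what makes the variance of the random Betti number negligible.\<close>
lemma pure_entry_le_normaliser:
  assumes q: "1 \<le> q" "q \<le> n" and n: "2 \<le> n" and c: "0 < c" and r: "p + n \<le> r" "0 < r"
    and p: "c * real r / 2 \<le> real p" and b: "c * real r / 2 \<le> real (r - p - n)"
    and I: "I \<in> subsets_idx n r"
  shows "pure_entry n r I p q \<le>
    2 ^ n * fact (q - 1) * fact (n - q) / (c / 2) ^ (2 * (n - 1)) / real r * betti_normaliser n q r p"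
proof -
  define k1 k2 b where "k1 = q - 1" and "k2 = n - q" and "b = r - p - n"
  define C0 :: real where "C0 = 2 ^ n * fact k1 * fact k2"
  define N where "N = betti_normaliser n q r p"
  define L where "L = (c * real r / 2) ^ (n - 1)"
  have nk: "n - 1 = k1 + k2" using q unfolding k1_def k2_def by simp
  have L0: "0 < L" unfolding L_def using c r by simp
  have L_le: "L \<le> real p ^ k1 * real b ^ k2"
  proof -
    have "L = (c * real r / 2) ^ k1 * (c * real r / 2) ^ k2" unfolding L_def nk by (simp add: power_add)
    also have "\<dots> \<le> real p ^ k1 * real b ^ k2"
      using p b c r unfolding b_def by (intro mult_mono power_mono) auto
    finally show ?thesis .
  qed
  have "0 < real p ^ k1 * real b ^ k2" using L0 L_le by linarith
  then have pow_pos: "0 < real p ^ k1" "0 < real b ^ k2"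
    by (auto simp: zero_less_mult_iff zero_less_power_eq)
  have N_eq: "N = fact (p + b) / (fact p * fact b) * (real p ^ k1 * real b ^ k2) / C0"
    unfolding N_def betti_normaliser_def mu_def k1_def k2_def b_def C0_def using r
    by (simp add: binomial_fact) (simp add: add.commute)
  have "pure_entry n r I p q \<le> fact (p + b) / (fact (p + k1) * fact (b + k2)) * real r ^ (n - 1)"
    using pure_entries_column(2)[OF q r(1) I] r unfolding k1_def k2_def b_def
    by (simp add: Nat.add_diff_assoc)
  also have "\<dots> \<le> fact (p + b) / (real p ^ k1 * fact p * (real b ^ k2 * fact b)) * real r ^ (n - 1)"
    using pow_pos fact_shift_bounds(1)[of p k1] fact_shift_bounds(1)[of b k2]
    by (intro mult_right_mono divide_left_mono mult_mono mult_pos_pos) auto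
  also have "\<dots> = N * C0 * real r ^ (n - 1) / (real p ^ k1 * real b ^ k2) ^ 2"
    unfolding N_eq C0_def using L0 L_le by (simp add: field_simps power2_eq_square)
  also have "\<dots> \<le> N * C0 * real r ^ (n - 1) / L ^ 2"
    using L0 L_le pow_pos unfolding N_eq C0_def
    by (intro divide_left_mono power_mono mult_nonneg_nonneg mult_pos_pos) auto
  also have "\<dots> = N * C0 / ((c / 2) ^ (2 * (n - 1)) * real r ^ (n - 1))"
  proof -
    define A R where "A = (c / 2) ^ (n - 1)" and "R = real r ^ (n - 1)"
    have "L = A * R" unfolding L_def A_def R_def power_mult_distrib[symmetric] by (simp add: mult.commute)
    moreover have "(c / 2) ^ (2 * (n - 1)) = A^2"
      unfolding A_def by (simp add: power_mult[symmetric] mult.commute)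
    moreover have "0 < R" unfolding R_def using r by simp
    ultimately show ?thesis unfolding R_def[symmetric] by (simp add: power2_eq_square)
  qed
  also have "\<dots> \<le> N * C0 / ((c / 2) ^ (2 * (n - 1)) * real r)"
  proof -
    have "real r ^ 1 \<le> real r ^ (n - 1)" using n r by (intro power_increasing) auto
    then show ?thesis using c r unfolding N_eq C0_def
      by (intro divide_left_mono mult_left_mono mult_nonneg_nonneg) auto
  qed
  finally show ?thesis unfolding N_def C0_def k1_def k2_def by (simp add: field_simps)
qed

definition central_column :: "nat \<Rightarrow> real \<Rightarrow> nat \<Rightarrow> nat \<Rightarrow> bool" where
  "central_column n c r p \<longleftrightarrow> p \<le> r - n \<and> c \<le> real p / real r \<and> real p / real r \<le> 1 - c"

lemma central_column_sizes:
  assumes p: "central_column n c r p" and n: "1 \<le> n" and large: "2 * (real A + real n) \<le> c * real r"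
  shows "c * real r / 2 \<le> real p" "c * real r / 2 \<le> real (r - p - n)"
    "A \<le> p" "A \<le> r - p - n" "0 < p" "p + n < r"
proof -
  have cr: "2 \<le> c * real r" using large n by simp
  then have r: "0 < real r" by (cases "r = 0") auto
  have pr: "c * real r \<le> real p" "real p \<le> (1 - c) * real r"
    using p r unfolding central_column_def by (auto simp: pos_le_divide_eq pos_divide_le_eq)
  moreover have "(1 - c) * real r = real r - c * real r" by (simp add: algebra_simps)
  moreover have "real n < c * real r" using large n by simp
  ultimately have "real p + real n < real r" by linarith
  then have pn: "p + n < r" by linarith
  then have b: "real (r - p - n) = real r - real p - real n" by (simp add: of_nat_diff)
  have half_p: "c * real r / 2 \<le> real p" using pr cr by simp
  moreover have half_b: "c * real r / 2 \<le> real (r - p - n)"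
    using pr large unfolding b by (simp add: algebra_simps)
  ultimately show "c * real r / 2 \<le> real p" "c * real r / 2 \<le> real (r - p - n)" "p + n < r"
    using pn by auto
  show "A \<le> p" "0 < p" using half_p large n by simp_all
  show "A \<le> r - p - n" using half_b large n by simp
qed

lemma product_near_one:
  fixes x y d :: real
  assumes "\<bar>x - 1\<bar> < d" "\<bar>y - 1\<bar> < d" "d \<le> 1"
  shows "\<bar>x * y - 1\<bar> \<le> 3 * d"
proof -
  have "\<bar>(x - 1) * y\<bar> \<le> d * 2"
    unfolding abs_mult using assms by (intro mult_mono) auto
  moreover have "x * y - 1 = (x - 1) * y + (y - 1)" by (simp add: algebra_simps)
  ultimately show ?thesis using assms by linarith
qed

lemma mean_near_normaliser:
  assumes q: "1 \<le> q" "q \<le> n" and c: "0 < c" and \<delta>: "0 < \<delta>"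
  shows "\<exists>R. \<forall>r\<ge>R. \<forall>p. central_column n c r p \<longrightarrow>
    \<bar>(\<Sum>I\<in>subsets_idx n r. pure_entry n r I p q) / 2 - betti_normaliser n q r p\<bar>
      \<le> \<delta> * betti_normaliser n q r p"
proof -
  define d where "d = min 1 (\<delta> / 3)"
  have d: "0 < d" "d \<le> 1" "3 * d \<le> \<delta>" using \<delta> unfolding d_def by auto
  have "\<forall>\<^sub>F a in sequentially. \<bar>esym_ratio k a - 1\<bar> < d" for k
    using tendstoD[OF esym_ratio_tendsto d(1)] by (simp add: dist_real_def)
  then have "\<forall>\<^sub>F a in sequentially. \<bar>esym_ratio (q - 1) a - 1\<bar> < d \<and> \<bar>esym_ratio (n - q) a - 1\<bar> < d"
    by (intro eventually_conj)
  then obtain A where A: "\<And>a. A \<le> a \<Longrightarrow>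
      \<bar>esym_ratio (q - 1) a - 1\<bar> < d \<and> \<bar>esym_ratio (n - q) a - 1\<bar> < d"
    unfolding eventually_sequentially by blast
  show ?thesis
  proof (intro exI allI impI)
    fix r p assume "nat \<lceil>2 * (real A + real n) / c\<rceil> \<le> r" and p: "central_column n c r p"
    then have "2 * (real A + real n) \<le> c * real r"
      using c by (simp add: nat_le_iff ceiling_le_iff pos_divide_le_eq mult.commute)
    note sizes = central_column_sizes[OF p _ this]
    define N where "N = betti_normaliser n q r p"
    have N: "0 < N" unfolding N_def using sizes q by (intro betti_normaliser_pos) auto
    define G where "G = esym_ratio (q - 1) p * esym_ratio (n - q) (r - p - n)"
    have "\<bar>G - 1\<bar> \<le> \<delta>"
      unfolding G_def using product_near_one[OF conjunct1[OF A] conjunct2[OF A] d(2)] sizes q d by force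
    moreover have "\<bar>G * N - N\<bar> = \<bar>G - 1\<bar> * N"
    proof -
      have "G * N - N = (G - 1) * N" by (simp add: algebra_simps)
      then show ?thesis using N by (simp add: abs_mult)
    qed
    ultimately have "\<bar>G * N - N\<bar> \<le> \<delta> * N" using N by (simp add: mult_right_mono)
    then show "\<bar>(\<Sum>I\<in>subsets_idx n r. pure_entry n r I p q) / 2 - N\<bar> \<le> \<delta> * N"
      unfolding N_def G_def using mean_over_normaliser[OF q] sizes q by simp
  qed
qed

lemma rand_space_unif01: "rand_space n r = PiM (subsets_idx n r) (\<lambda>_. unif01)"
  unfolding rand_space_def unif01_def ..

lemma betti_deviation_bound:
  assumes q: "1 \<le> q" "q \<le> n" and n: "2 \<le> n" and c: "0 < c" and \<epsilon>: "0 < \<epsilon>"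
  shows "\<exists>C R. \<forall>r\<ge>R. \<forall>p. central_column n c r p \<longrightarrow>
    measure (rand_space n r) {X \<in> space (rand_space n r).
      \<epsilon> < \<bar>betti_entry n r X p q / betti_normaliser n q r p - 1\<bar>} \<le> C / real r"
proof -
  define C where "C = 2 ^ n * fact (q - 1) * fact (n - q) / (c / 2) ^ (2 * (n - 1))"
  have "0 < min (1/2) (\<epsilon>/2)" using \<epsilon> by simp
  from mean_near_normaliser[OF q c this] obtain R where mean: "\<forall>r\<ge>R. \<forall>p. central_column n c r p \<longrightarrow>
      \<bar>(\<Sum>I\<in>subsets_idx n r. pure_entry n r I p q) / 2 - betti_normaliser n q r p\<bar>
        \<le> min (1/2) (\<epsilon>/2) * betti_normaliser n q r p" by blast
  show ?thesis
  proof (intro exI allI impI)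
    fix r p assume r: "max R (nat \<lceil>2 * real n / c\<rceil>) \<le> r" and p: "central_column n c r p"
    then have "2 * (real 0 + real n) \<le> c * real r"
      using c by (simp add: nat_le_iff ceiling_le_iff pos_divide_le_eq mult.commute)
    note sizes = central_column_sizes[OF p _ this]
    define S N w where "S = subsets_idx n r" and "N = betti_normaliser n q r p"
      and "w I = pure_entry n r I p q" for I
    have N: "0 < N" unfolding N_def using sizes n by (intro betti_normaliser_pos) auto
    have w: "0 \<le> w I \<and> w I \<le> C / real r * N" if "I \<in> S" for I
      using pure_entries_column(2)[OF q _ that[unfolded S_def]] sizes q n c
        pure_entry_le_normaliser[OF q n c _ _ _ _ that[unfolded S_def]]
      unfolding w_def C_def N_def by auto
    have m: "\<bar>(\<Sum>I\<in>S. w I) / 2 - N\<bar> \<le> min (1/2) (\<epsilon>/2) * N"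
      using mean p r unfolding S_def w_def N_def by auto
    moreover have "min (1/2) (\<epsilon>/2) * N \<le> 1/2 * N" using N by (intro mult_right_mono) auto
    ultimately have sum_le: "(\<Sum>I\<in>S. w I) \<le> 3 * N" by (simp add: abs_le_iff)
    have "min (1/2) (\<epsilon>/2) * N \<le> \<epsilon> / 2 * N" using N by (intro mult_right_mono) auto
    with m have m': "\<bar>(\<Sum>I\<in>S. w I) / 2 - N\<bar> \<le> \<epsilon> / 2 * N" by linarith
    have "measure (PiM S (\<lambda>_. unif01)) {X \<in> space (PiM S (\<lambda>_. unif01)).
        \<epsilon> < \<bar>(\<Sum>I\<in>S. X I * w I) / N - 1\<bar>} \<le> C / real r * N * (\<Sum>I\<in>S. w I) / (\<epsilon>^2 * N^2)"
      by (rule weighted_uniform_sum_deviation[OF _ w N \<epsilon> m']) (simp add: S_def finite_subsets_idx)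
    then have "measure (rand_space n r) {X \<in> space (rand_space n r).
        \<epsilon> < \<bar>betti_entry n r X p q / N - 1\<bar>} \<le> C / real r * N * (\<Sum>I\<in>S. w I) / (\<epsilon>^2 * N^2)"
      unfolding rand_space_unif01 betti_entry_def S_def w_def .
    also have "\<dots> \<le> C / real r * N * (3 * N) / (\<epsilon>^2 * N^2)"
      using N sum_le \<epsilon> w by (intro divide_right_mono mult_left_mono) (auto simp: C_def)
    also have "\<dots> = 3 * C / \<epsilon>^2 / real r"
      using N by (simp add: power2_eq_square field_simps)
    finally show "measure (rand_space n r) {X \<in> space (rand_space n r).
        \<epsilon> < \<bar>betti_entry n r X p q / betti_normaliser n q r p - 1\<bar>} \<le> 3 * C / \<epsilon>^2 / real r"
      unfolding N_def .
  qed
qed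

theorem mainTheorem5:
  fixes n q :: nat and c :: real
  assumes "n \<ge> 2" and "1 \<le> q" and "q \<le> n" and "0 < c" and "c < 1/2"
  shows "\<forall>\<epsilon>>0. \<forall>\<eta>>0. \<exists>R::nat. \<forall>r\<ge>R. \<forall>p::nat.
           p \<le> r - n \<and> c \<le> real p / real r \<and> real p / real r \<le> 1 - c \<longrightarrow>
           measure (rand_space n r)
             {X \<in> space (rand_space n r).
                \<bar>betti_entry n r X p q / (real ((r - n) choose p) * mu n q r p) - 1\<bar> > \<epsilon>} < \<eta>"
proof (intro allI impI)
  fix \<epsilon> \<eta> :: real assume \<epsilon>: "0 < \<epsilon>" and \<eta>: "0 < \<eta>"
  obtain C R where deviation: "\<forall>r\<ge>R. \<forall>p. central_column n c r p \<longrightarrow>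
      measure (rand_space n r) {X \<in> space (rand_space n r).
        \<epsilon> < \<bar>betti_entry n r X p q / betti_normaliser n q r p - 1\<bar>} \<le> C / real r"
    using betti_deviation_bound[OF assms(2,3,1,4) \<epsilon>] by blast
  have small: "C / real r < \<eta>" if "max R (nat \<lceil>C / \<eta>\<rceil> + 1) \<le> r" for r
  proof -
    have "C / \<eta> < real r" using that by linarith
    then show ?thesis using \<eta> that by (simp add: divide_less_eq mult.commute)
  qed
  show "\<exists>R::nat. \<forall>r\<ge>R. \<forall>p::nat. p \<le> r - n \<and> c \<le> real p / real r \<and> real p / real r \<le> 1 - c \<longrightarrow>
      measure (rand_space n r) {X \<in> space (rand_space n r).
        \<bar>betti_entry n r X p q / (real ((r - n) choose p) * mu n q r p) - 1\<bar> > \<epsilon>} < \<eta>"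
    using deviation small unfolding central_column_def betti_normaliser_def
    by (intro exI[of _ "max R (nat \<lceil>C / \<eta>\<rceil> + 1)"]) (fastforce intro: le_less_trans)
qed

end
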